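(* Let $R$ be an NC-nilpotent algebra, $\pi:R\to R_{ab}$ the abelianization map, and $\overline S\subset R_{ab}-\{0\}$ any multiplicative subset. Then $S=\pi^{-1}(\overline S)$ satisfies the Ore conditions: (OL1) for any $a\in R$, $s\in S$ there are $b\in R$, $u\in S$ with $ua=bs$; (OL2) if $as=0$ with $a\in R,s\in S$ then $ta=0$ for some $t\in S$; (OR1) for any $b\in R$, $u\in S$ there are $a\in R$, $s\in S$ with $ua=bs$; (OR2) if $sa=0$ with $a\in R,s\in S$ then $at=0$ for some $t\in S$.
   Context: Algebras are associative unital $\mathbf{C}$-algebras. $R_{ab}=R/[R,R]$. NC-filtration: with $R^{\rm Lie}_1=R$, $R^{\rm Lie}_m=[R,R^{\rm Lie}_{m-1}]$ ($[a,b]=ab-ba$), $F^dR=\sum_m\sum_{i_1+\dots+i_m-m=d}R\,R^{\rm Lie}_{i_1}R\cdots R\,R^{\rm Lie}_{i_m}R$. $R$ is NC-nilpotent if $F^iR=0$ for $i\gg0$. *)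

theory Defs
  imports Complex_Main
begin

class complex_algebra_1 = ring_1 +
  fixes scaleC :: "complex \<Rightarrow> 'a \<Rightarrow> 'a"
  assumes scaleC_add_right: "scaleC c (x + y) = scaleC c x + scaleC c y"
    and scaleC_add_left: "scaleC (c + d) x = scaleC c x + scaleC d x"
    and scaleC_scaleC: "scaleC c (scaleC d x) = scaleC (c * d) x"
    and scaleC_one: "scaleC 1 x = x"
    and scaleC_mult_left: "scaleC c (x * y) = scaleC c x * y"
    and scaleC_mult_right: "scaleC c (x * y) = x * scaleC c y"

inductive_set cspan :: "'a::complex_algebra_1 set \<Rightarrow> 'a set" for X where
  cspan_zero: "0 \<in> cspan X"
| cspan_base: "x \<in> X \<Longrightarrow> x \<in> cspan X"
| cspan_add: "x \<in> cspan X \<Longrightarrow> y \<in> cspan X \<Longrightarrow> x + y \<in> cspan X"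
| cspan_scale: "x \<in> cspan X \<Longrightarrow> scaleC c x \<in> cspan X"

definition commutator :: "'a::ring \<Rightarrow> 'a \<Rightarrow> 'a" where
  "commutator a b = a * b - b * a"

text \<open>Lower central series: lie_pow 1 = R, lie_pow (m+1) = [R, lie_pow m]
  (linear span of commutators). The index 0 is not used (set to R by convention).\<close>
fun lie_pow :: "nat \<Rightarrow> 'a::complex_algebra_1 set" where
  "lie_pow 0 = UNIV"
| "lie_pow (Suc 0) = UNIV"
| "lie_pow (Suc (Suc m)) = cspan {commutator a b | a b. b \<in> lie_pow (Suc m)}"

text \<open>NC-filtration: F^d R is the span of all products
  r0 * l1 * r1 * ... * lm * rm with m \<ge> 1, l_j \<in> lie_pow i_j, i_j \<ge> 1,
  and (i_1 - 1) + ... + (i_m - 1) = d. A triple (i, l, r) encodes the factor l_j * r_j.\<close>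
definition nc_filt :: "nat \<Rightarrow> 'a::complex_algebra_1 set" where
  "nc_filt d = cspan {r0 * prod_list (map (\<lambda>(i, l, r). l * r) ps) | r0 ps.
      ps \<noteq> [] \<and> (\<forall>(i, l, r) \<in> set ps. 1 \<le> i \<and> l \<in> lie_pow i) \<and>
      sum_list (map (\<lambda>(i, l, r). i - 1) ps) = d}"

definition nc_nilpotent :: "'a::complex_algebra_1 itself \<Rightarrow> bool" where
  "nc_nilpotent _ \<longleftrightarrow> (\<exists>N. \<forall>i\<ge>N. nc_filt i = ({0} :: 'a set))"

text \<open>The two-sided ideal [R,R] generated by commutators, and the abelianization
  map \<pi> : R \<rightarrow> R_ab = R/[R,R], sending x to its coset.\<close>
definition comm_ideal :: "'a::complex_algebra_1 set" where
  "comm_ideal = cspan {x * commutator a b * y | x a b y. True}"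

definition ab_class :: "'a::complex_algebra_1 \<Rightarrow> 'a set" where
  "ab_class x = {y. x - y \<in> comm_ideal}"

definition R_ab :: "'a::complex_algebra_1 set set" where
  "R_ab = range ab_class"

definition ab_mult :: "'a::complex_algebra_1 set \<Rightarrow> 'a set \<Rightarrow> 'a set" where
  "ab_mult A B = ab_class ((SOME a. A = ab_class a) * (SOME b. B = ab_class b))"

definition multiplicative_subset :: "'a::complex_algebra_1 set set \<Rightarrow> bool" where
  "multiplicative_subset T \<longleftrightarrow> T \<subseteq> R_ab \<and> ab_class 1 \<in> T \<and>
     (\<forall>A\<in>T. \<forall>B\<in>T. ab_mult A B \<in> T)"

end

theory Submission
  imports Defs
begin

text \<open>NC-nilpotence makes every inner derivation ad s = [s, -] nilpotent: its N-th iterate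
  takes values in the (N+1)-st term of the lower central series, which lies in F^N R = 0.
  Iterating s a = a s + [s, a] then shows s^N a \<in> R s and b s^N \<in> s R, and that s^N a = 0
  if a s = 0 (resp. a s^N = 0 if s a = 0). As \<pi> is multiplicative, S is closed under powers,
  so s^N is a witness in each Ore condition.\<close>

lemma scaleC_zero_left: "scaleC 0 (x::'a::complex_algebra_1) = 0"
proof -
  have "scaleC 0 x = scaleC 0 x + scaleC 0 x"
    using scaleC_add_left[of 0 0 x] by simp
  then show ?thesis by simp
qed

lemma scaleC_minus_one: "scaleC (-1) (x::'a::complex_algebra_1) = - x"
proof (rule minus_unique[symmetric])
  have "scaleC 1 x + scaleC (-1) x = scaleC (1 + -1) x"
    by (rule scaleC_add_left[symmetric])
  also have "\<dots> = 0"
    by (simp add: scaleC_zero_left)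
  finally show "x + scaleC (-1) x = 0"
    by (simp only: scaleC_one)
qed

lemma cspan_minus: "x \<in> cspan X \<Longrightarrow> - x \<in> cspan X"
  using cspan_scale[of x X "-1"] by (simp only: scaleC_minus_one)

lemma cspan_diff: "x \<in> cspan X \<Longrightarrow> y \<in> cspan X \<Longrightarrow> x - y \<in> cspan X"
  unfolding diff_conv_add_uminus by (intro cspan_add cspan_minus)

lemma cspan_mult_left:
  assumes "y \<in> cspan X" and "\<And>x. x \<in> X \<Longrightarrow> z * x \<in> X"
  shows "z * y \<in> cspan X"
  using assms(1)
proof (induction rule: cspan.induct)
  case cspan_zero
  then show ?case by (simp add: cspan.cspan_zero)
next
  case (cspan_base x)
  then show ?case by (simp add: assms(2) cspan.cspan_base)
next
  case (cspan_add x y)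
  then show ?case by (simp add: distrib_left cspan.cspan_add)
next
  case (cspan_scale x c)
  then show ?case by (simp add: scaleC_mult_right[symmetric] cspan.cspan_scale)
qed

lemma cspan_mult_right:
  assumes "y \<in> cspan X" and "\<And>x. x \<in> X \<Longrightarrow> x * z \<in> X"
  shows "y * z \<in> cspan X"
  using assms(1)
proof (induction rule: cspan.induct)
  case cspan_zero
  then show ?case by (simp add: cspan.cspan_zero)
next
  case (cspan_base x)
  then show ?case by (simp add: assms(2) cspan.cspan_base)
next
  case (cspan_add x y)
  then show ?case by (simp add: distrib_right cspan.cspan_add)
next
  case (cspan_scale x c)
  then show ?case by (simp add: scaleC_mult_left[symmetric] cspan.cspan_scale)
qed

lemma comm_ideal_add: "x \<in> comm_ideal \<Longrightarrow> y \<in> comm_ideal \<Longrightarrow> x + y \<in> comm_ideal"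
  unfolding comm_ideal_def by (rule cspan_add)

lemma comm_ideal_diff: "x \<in> comm_ideal \<Longrightarrow> y \<in> comm_ideal \<Longrightarrow> x - y \<in> comm_ideal"
  unfolding comm_ideal_def by (rule cspan_diff)

lemma comm_ideal_mult_left:
  fixes y z :: "'a::complex_algebra_1"
  shows "y \<in> comm_ideal \<Longrightarrow> z * y \<in> comm_ideal"
  unfolding comm_ideal_def
proof (erule cspan_mult_left)
  fix x :: 'a assume "x \<in> {p * commutator a b * q |p a b q. True}"
  then obtain p a b q where "z * x = (z * p) * commutator a b * q"
    by (auto simp: mult.assoc)
  then show "z * x \<in> {p * commutator a b * q |p a b q. True}"
    by blast
qed

lemma comm_ideal_mult_right:
  fixes y z :: "'a::complex_algebra_1"
  shows "y \<in> comm_ideal \<Longrightarrow> y * z \<in> comm_ideal"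
  unfolding comm_ideal_def
proof (erule cspan_mult_right)
  fix x :: 'a assume "x \<in> {p * commutator a b * q |p a b q. True}"
  then obtain p a b q where "x * z = p * commutator a b * (q * z)"
    by (auto simp: mult.assoc)
  then show "x * z \<in> {p * commutator a b * q |p a b q. True}"
    by blast
qed

lemma ab_class_eq_iff: "ab_class x = ab_class y \<longleftrightarrow> x - y \<in> comm_ideal"
proof
  assume "ab_class x = ab_class y"
  moreover have "y \<in> ab_class y"
    unfolding ab_class_def comm_ideal_def by (simp add: cspan_zero)
  ultimately have "y \<in> ab_class x"
    by simp
  then show "x - y \<in> comm_ideal"
    unfolding ab_class_def by simp
next
  assume xy: "x - y \<in> comm_ideal"
  have "x - z \<in> comm_ideal \<longleftrightarrow> y - z \<in> comm_ideal" for z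
  proof -
    have "x - z = (x - y) + (y - z)" and "y - z = (x - z) - (x - y)"
      by simp_all
    then show ?thesis
      using xy comm_ideal_add comm_ideal_diff by metis
  qed
  then show "ab_class x = ab_class y"
    unfolding ab_class_def by simp
qed

lemma ab_mult_ab_class: "ab_mult (ab_class x) (ab_class y) = ab_class (x * y)"
proof -
  define x' where "x' = (SOME a. ab_class x = ab_class a)"
  define y' where "y' = (SOME b. ab_class y = ab_class b)"
  have "ab_class x = ab_class x'" "ab_class y = ab_class y'"
    unfolding x'_def y'_def by (rule someI[of _ x] someI[of _ y], simp)+
  then have "x' - x \<in> comm_ideal" "y' - y \<in> comm_ideal"
    by (simp_all add: ab_class_eq_iff[symmetric])
  moreover have "x' * y' - x * y = (x' - x) * y' + x * (y' - y)"
    by (simp add: algebra_simps)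
  ultimately have "x' * y' - x * y \<in> comm_ideal"
    by (simp add: comm_ideal_add comm_ideal_mult_left comm_ideal_mult_right)
  then show ?thesis
    unfolding ab_mult_def x'_def [symmetric] y'_def [symmetric] by (simp add: ab_class_eq_iff)
qed

lemma multiplicative_subset_power:
  assumes "multiplicative_subset T" and "ab_class s \<in> T"
  shows "ab_class (s ^ k) \<in> T"
proof (induction k)
  case 0
  then show ?case using assms(1) unfolding multiplicative_subset_def by simp
next
  case (Suc k)
  then have "ab_mult (ab_class s) (ab_class (s ^ k)) \<in> T"
    using assms unfolding multiplicative_subset_def by blast
  then show ?case by (simp add: ab_mult_ab_class)
qed

lemma funpow_commutator_in_lie_pow: "(commutator x ^^ k) a \<in> lie_pow (Suc k)"
  by (induction k) (auto intro: cspan_base)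

lemma lie_pow_Suc_subset_nc_filt: "lie_pow (Suc k) \<subseteq> nc_filt k"
proof
  fix l :: 'a
  assume "l \<in> lie_pow (Suc k)"
  then have "l = 1 * prod_list (map (\<lambda>(i, l, r). l * r) [(Suc k, l, 1)])"
    and "l \<in> lie_pow (Suc k)"
    by simp_all
  then show "l \<in> nc_filt k"
    unfolding nc_filt_def by (intro cspan_base) fastforce
qed

lemma nc_nilpotent_imp_funpow_commutator_eq_0:
  assumes "nc_nilpotent TYPE('a::complex_algebra_1)"
  obtains N where "\<And>x a :: 'a. (commutator x ^^ N) a = 0"
proof -
  obtain N where N: "\<And>i. i \<ge> N \<Longrightarrow> nc_filt i = ({0} :: 'a set)"
    using assms unfolding nc_nilpotent_def by blast
  have "(commutator x ^^ N) a = 0" for x a :: 'a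
    using funpow_commutator_in_lie_pow lie_pow_Suc_subset_nc_filt N[of N] by blast
  then show ?thesis by (rule that)
qed

lemma funpow_commutator_Suc:
  "(commutator s ^^ Suc k) a = (commutator s ^^ k) (commutator s a)"
  by (simp add: funpow_Suc_right del: funpow.simps)

lemma ad_nilpotent_left_ore:
  fixes s a :: "'a::ring_1"
  assumes "(commutator s ^^ k) a = 0"
  shows "\<exists>b. s ^ k * a = b * s"
  using assms
proof (induction k arbitrary: a)
  case (Suc k)
  then obtain b where b: "s ^ k * commutator s a = b * s"
    by (metis funpow_commutator_Suc)
  have "s ^ Suc k * a = s ^ k * (a * s + commutator s a)"
    by (simp add: commutator_def distrib_left power_Suc2 mult.assoc del: power_Suc)
  also have "\<dots> = (s ^ k * a + b) * s"
    using b by (simp add: algebra_simps)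
  finally show ?case ..
qed (auto intro: exI[of _ 0])

lemma ad_nilpotent_right_ore:
  fixes s b :: "'a::ring_1"
  assumes "(commutator s ^^ k) b = 0"
  shows "\<exists>a. b * s ^ k = s * a"
  using assms
proof (induction k arbitrary: b)
  case (Suc k)
  then obtain a where a: "commutator s b * s ^ k = s * a"
    by (metis funpow_commutator_Suc)
  have "b * s ^ Suc k = (s * b - commutator s b) * s ^ k"
    by (simp add: commutator_def mult.assoc)
  also have "\<dots> = s * (b * s ^ k - a)"
    using a by (simp add: algebra_simps)
  finally show ?case ..
qed (auto intro: exI[of _ 0])

lemma ad_nilpotent_left_annihilator:
  fixes s a :: "'a::ring_1"
  assumes "(commutator s ^^ k) a = 0" and "a * s = 0"
  shows "s ^ k * a = 0"
  using assms
proof (induction k arbitrary: a)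
  case (Suc k)
  moreover have "commutator s a * s = 0"
    using Suc.prems(2) by (simp add: commutator_def left_diff_distrib mult.assoc)
  ultimately have "s ^ k * commutator s a = 0"
    by (metis funpow_commutator_Suc)
  have "s ^ Suc k * a = s ^ k * (a * s + commutator s a)"
    by (simp add: commutator_def distrib_left power_Suc2 mult.assoc del: power_Suc)
  also have "\<dots> = 0"
    using \<open>s ^ k * commutator s a = 0\<close> Suc.prems(2) by (simp add: distrib_left)
  finally show ?case .
qed simp

lemma ad_nilpotent_right_annihilator:
  fixes s a :: "'a::ring_1"
  assumes "(commutator s ^^ k) a = 0" and "s * a = 0"
  shows "a * s ^ k = 0"
  using assms
proof (induction k arbitrary: a)
  case (Suc k)
  moreover have "s * commutator s a = 0"
    using Suc.prems(2) by (simp add: commutator_def right_diff_distrib mult.assoc[symmetric])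
  ultimately have "commutator s a * s ^ k = 0"
    by (metis funpow_commutator_Suc)
  have "a * s ^ Suc k = (s * a - commutator s a) * s ^ k"
    by (simp add: commutator_def mult.assoc)
  also have "\<dots> = 0"
    using \<open>commutator s a * s ^ k = 0\<close> Suc.prems(2) by (simp add: left_diff_distrib mult.assoc)
  finally show ?case .
qed simp

theorem proposition2p1p5:
  fixes Sbar :: "'a::complex_algebra_1 set set"
  assumes "nc_nilpotent TYPE('a)"
    and "multiplicative_subset Sbar"
    and "Sbar \<subseteq> R_ab - {ab_class 0}"
  defines "S \<equiv> {x. ab_class x \<in> Sbar}"
  shows "(\<forall>a s. s \<in> S \<longrightarrow> (\<exists>b u. u \<in> S \<and> u * a = b * s))
    \<and> (\<forall>a s. s \<in> S \<longrightarrow> a * s = 0 \<longrightarrow> (\<exists>t\<in>S. t * a = 0))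
    \<and> (\<forall>b u. u \<in> S \<longrightarrow> (\<exists>a s. s \<in> S \<and> u * a = b * s))
    \<and> (\<forall>a s. s \<in> S \<longrightarrow> s * a = 0 \<longrightarrow> (\<exists>t\<in>S. a * t = 0))"
proof -
  obtain N where N: "\<And>x a :: 'a. (commutator x ^^ N) a = 0"
    using nc_nilpotent_imp_funpow_commutator_eq_0[OF assms(1)] by blast
  have power_in_S: "s ^ N \<in> S" if "s \<in> S" for s
    using multiplicative_subset_power[OF assms(2)] that unfolding S_def by blast
  show ?thesis
  proof (intro conjI allI impI)
    fix a s assume "s \<in> S"
    obtain b where "s ^ N * a = b * s"
      using ad_nilpotent_left_ore[OF N] by blast
    with \<open>s \<in> S\<close> show "\<exists>b u. u \<in> S \<and> u * a = b * s"
      using power_in_S by blast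
  next
    fix a s assume "s \<in> S" "a * s = 0"
    have "s ^ N * a = 0"
      using \<open>a * s = 0\<close> by (rule ad_nilpotent_left_annihilator[OF N])
    with \<open>s \<in> S\<close> show "\<exists>t\<in>S. t * a = 0"
      using power_in_S by blast
  next
    fix b u assume "u \<in> S"
    obtain a where "b * u ^ N = u * a"
      using ad_nilpotent_right_ore[OF N] by blast
    with \<open>u \<in> S\<close> show "\<exists>a s. s \<in> S \<and> u * a = b * s"
      using power_in_S by (intro exI[of _ a] exI[of _ "u ^ N"]) simp
  next
    fix a s assume "s \<in> S" "s * a = 0"
    have "a * s ^ N = 0"
      using \<open>s * a = 0\<close> by (rule ad_nilpotent_right_annihilator[OF N])
    with \<open>s \<in> S\<close> show "\<exists>t\<in>S. a * t = 0"
      using power_in_S by blast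
  qed
qed

end
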